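(* Let $g\colon(\mathbb R^+,0)\to(\mathbb R^+,0)$ be a germ of a $C^2$-smooth function such that $g(y)=y+R(y)$ with $R(y)=O(y^2)$, and let $h(x)=-\frac{1}{\ln x}$ (so $h^{-1}(y)=e^{-1/y}$). Then $H=h^{-1}\circ g\circ h$ (with $H(0)=0$) is $C^1$-smooth near $0$. Moreover, if $g$ depends on a parameter $\varepsilon$ and $g''$ is $C^1$-smooth in $\varepsilon$, then $H'$ is also $C^1$-smooth with respect to $\varepsilon$. *)

theory Defs
  imports "HOL-Analysis.Analysis" "HOL-Library.Landau_Symbols"
begin

definition hmap :: "real \<Rightarrow> real" where
  "hmap x = - 1 / ln x"

definition hinv :: "real \<Rightarrow> real" where
  "hinv y = exp (- 1 / y)"

definition Hconj :: "(real \<Rightarrow> real) \<Rightarrow> real \<Rightarrow> real" where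
  "Hconj g x = (if x = 0 then 0 else hinv (g (hmap x)))"

text \<open>A representative on [0,delta) of a C^2 germ g : (R^+,0) -> (R^+,0) with
  g(y) = y + R(y), R(y) = O(y^2); g1, g2 are its first and second derivatives
  (one-sided at 0).\<close>
definition admissible_germ ::
  "real \<Rightarrow> (real \<Rightarrow> real) \<Rightarrow> (real \<Rightarrow> real) \<Rightarrow> (real \<Rightarrow> real) \<Rightarrow> bool" where
  "admissible_germ \<delta> g g1 g2 \<longleftrightarrow>
     \<delta> > 0 \<and> g 0 = 0 \<and> (\<forall>y\<in>{0<..<\<delta>}. g y > 0) \<and>
     (\<forall>y\<in>{0..<\<delta>}. (g has_real_derivative g1 y) (at y within {0..<\<delta>})) \<and>
     (\<forall>y\<in>{0..<\<delta>}. (g1 has_real_derivative g2 y) (at y within {0..<\<delta>})) \<and>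
     continuous_on {0..<\<delta>} g2 \<and>
     (\<lambda>y. g y - y) \<in> O[at_right 0](\<lambda>y. y ^ 2)"

end

theory Submission
  imports Defs
begin

text \<open>
  Taylor's formula with integral remainder writes the germ as g(y) = y (1 + y q(y)) and
  g'(y) = 1 + y p(y), where q(y) = int_0^1 (1 - s) g''(sy) ds and p(y) = int_0^1 g''(sy) ds
  (g'(0) = 1 because g(y) - y = O(y^2)). These remainders are continuous, and differentiable in
  a parameter with continuous derivative whenever g'' is, by differentiation under the integral.
  Since -1/g(y) = -1/y + q/(1 + yq) and exp(-1/h(x)) = x, the conjugate is
  H(x) = x exp(q/(1 + yq)) with y = h(x). As h is continuous at 0 with h(0) = 0, this gives
  H'(0) = exp(q(0)), and for x > 0 the chain rule gives
  H'(x) = exp(q/(1 + yq)) (1 + yp) / (1 + yq)^2, a continuous function of x and of the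
  parameter whose parameter derivative is again continuous.
\<close>

lemma eventually_lipschitz_first_arg:
  fixes f f' :: "real \<Rightarrow> 'a::metric_space \<Rightarrow> real"
  assumes "open E" "e0 \<in> E" "y0 \<in> Y"
    and deriv: "\<And>e y. e \<in> E \<Longrightarrow> y \<in> Y \<Longrightarrow> ((\<lambda>e. f e y) has_real_derivative f' e y) (at e)"
    and cont_f': "continuous_on (E \<times> Y) (\<lambda>(e, y). f' e y)"
  shows "\<forall>\<^sub>F (e, y) in at (e0, y0) within E \<times> Y. \<bar>f e y - f e0 y\<bar> \<le> (\<bar>f' e0 y0\<bar> + 1) * \<bar>e - e0\<bar>"
  unfolding eventually_at
proof -
  obtain r where "r > 0" and ball: "ball e0 r \<subseteq> E"
    using \<open>open E\<close> \<open>e0 \<in> E\<close> open_contains_ball by blast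
  obtain d where "d > 0" and d: "\<And>q. q \<in> E \<times> Y \<Longrightarrow> dist q (e0, y0) < d \<Longrightarrow>
      dist ((\<lambda>(e, y). f' e y) q) (f' e0 y0) < 1"
    using cont_f' assms(2,3) unfolding continuous_on_iff
    by (metis mem_Sigma_iff zero_less_one case_prod_conv)
  have "\<bar>f e y - f e0 y\<bar> \<le> (\<bar>f' e0 y0\<bar> + 1) * \<bar>e - e0\<bar>"
    if "e \<in> E" "y \<in> Y" and near: "dist (e, y) (e0, y0) < min r d" for e y
  proof -
    have close: "dist (s, y) (e0, y0) < min r d" if "s \<in> closed_segment e0 e" for s
    proof -
      have "dist s e0 \<le> dist e e0"
        using segment_bound1[OF that] by (simp add: dist_norm norm_minus_commute)
      then have "dist (s, y) (e0, y0) \<le> dist (e, y) (e0, y0)"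
        by (simp add: dist_Pair_Pair power_mono)
      with near show ?thesis by linarith
    qed
    have seg: "s \<in> E" if "s \<in> closed_segment e0 e" for s
      using close[OF that] ball dist_fst_le[of "(s, y)" "(e0, y0)"] by (force simp: dist_commute)
    have "norm (f e y - f e0 y) \<le> (\<bar>f' e0 y0\<bar> + 1) * norm (e - e0)"
    proof (rule field_differentiable_bound[of "closed_segment e0 e" "\<lambda>s. f s y" "\<lambda>s. f' s y"])
      show "((\<lambda>s. f s y) has_field_derivative f' s y) (at s within closed_segment e0 e)"
        if "s \<in> closed_segment e0 e" for s
        using deriv[OF seg[OF that] \<open>y \<in> Y\<close>] by (rule has_field_derivative_at_within)
      show "norm (f' s y) \<le> \<bar>f' e0 y0\<bar> + 1" if "s \<in> closed_segment e0 e" for s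
        using d[of "(s, y)"] close[OF that] seg[OF that] \<open>y \<in> Y\<close> by (auto simp: dist_real_def)
    qed auto
    then show ?thesis by simp
  qed
  with \<open>r > 0\<close> \<open>d > 0\<close> show "\<exists>d>0. \<forall>q\<in>E \<times> Y. q \<noteq> (e0, y0) \<and> dist q (e0, y0) < d \<longrightarrow>
      (case q of (e, y) \<Rightarrow> \<bar>f e y - f e0 y\<bar> \<le> (\<bar>f' e0 y0\<bar> + 1) * \<bar>e - e0\<bar>)"
    by (intro exI[of _ "min r d"]) auto
qed

lemma continuous_on_Times_of_continuous_partial_derivative:
  fixes f f' :: "real \<Rightarrow> 'a::metric_space \<Rightarrow> real"
  assumes "open E"
    and deriv: "\<And>e y. e \<in> E \<Longrightarrow> y \<in> Y \<Longrightarrow> ((\<lambda>e. f e y) has_real_derivative f' e y) (at e)"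
    and cont_f': "continuous_on (E \<times> Y) (\<lambda>(e, y). f' e y)"
    and cont_f: "\<And>e. e \<in> E \<Longrightarrow> continuous_on Y (f e)"
  shows "continuous_on (E \<times> Y) (\<lambda>(e, y). f e y)"
  unfolding continuous_on_eq_continuous_within
proof safe
  fix e0 y0 assume e0: "e0 \<in> E" and y0: "y0 \<in> Y"
  let ?F = "at (e0, y0) within E \<times> Y"
  define M where "M = \<bar>f' e0 y0\<bar> + 1"
  have "((\<lambda>(e, y). f e y - f e0 y) \<longlongrightarrow> 0) ?F"
  proof (rule Lim_null_comparison)
    show "\<forall>\<^sub>F q in ?F. norm ((\<lambda>(e, y). f e y - f e0 y) q) \<le> M * \<bar>fst q - e0\<bar>"
      using eventually_lipschitz_first_arg[OF \<open>open E\<close> e0 y0 deriv cont_f']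
      by (rule eventually_mono) (auto simp: M_def)
    have "((\<lambda>q. M * \<bar>fst q - e0\<bar>) \<longlongrightarrow> M * \<bar>fst (e0, y0) - e0\<bar>) ?F"
      by (intro tendsto_intros)
    then show "((\<lambda>q. M * \<bar>fst q - e0\<bar>) \<longlongrightarrow> 0) ?F" by simp
  qed
  moreover have "continuous_on (E \<times> Y) (\<lambda>q. f e0 (snd q))"
    by (rule continuous_on_compose2[OF cont_f[OF e0] continuous_on_snd]) auto
  then have "((\<lambda>(e, y). f e0 y) \<longlongrightarrow> f e0 y0) ?F"
    using e0 y0 unfolding continuous_on_def split_beta by auto
  ultimately have "((\<lambda>(e, y). (f e y - f e0 y) + f e0 y) \<longlongrightarrow> 0 + f e0 y0) ?F"
    unfolding split_beta by (rule tendsto_add)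
  then show "continuous ?F (\<lambda>(e, y). f e y)"
    by (simp add: continuous_within)
qed

lemma mult_mem_atLeastLessThan:
  fixes s y \<delta> :: real
  assumes "s \<in> {0..1}" "y \<in> {0..<\<delta>}"
  shows "s * y \<in> {0..<\<delta>}"
  using assms mult_left_le_one_le[of y s] by auto

definition scaled_integral :: "(real \<Rightarrow> real) \<Rightarrow> (real \<Rightarrow> real) \<Rightarrow> real \<Rightarrow> real" where
  "scaled_integral w k y = integral {0..1} (\<lambda>s. w s * k (s * y))"

lemma has_integral_scaled_integral:
  assumes "continuous_on {0..1} w" "continuous_on {0..<\<delta>} k" "y \<in> {0..<\<delta>}"
  shows "((\<lambda>s. w s * k (s * y)) has_integral scaled_integral w k y) {0..1}"
proof -
  have "continuous_on {0..1} (\<lambda>s. k (s * y))"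
    by (rule continuous_on_compose2[OF assms(2)])
       (use assms(3) in \<open>auto intro!: continuous_intros mult_mem_atLeastLessThan\<close>)
  then show ?thesis
    unfolding scaled_integral_def
    by (intro integrable_integral integrable_continuous_interval continuous_intros assms(1))
qed

lemma continuous_on_scaled_integral:
  assumes "continuous_on {0..1} w" "continuous_on {0..<\<delta>} k"
  shows "continuous_on {0..<\<delta>} (scaled_integral w k)"
proof -
  have "continuous_on ({0..<\<delta>} \<times> cbox 0 1) (\<lambda>(y, s). w s * k (s * y))"
    unfolding split_beta
    by (intro continuous_intros continuous_on_compose2[OF assms(1)]
        continuous_on_compose2[OF assms(2)]) (auto intro: mult_mem_atLeastLessThan)
  from integral_continuous_on_param[OF this] show ?thesis
    by (simp add: scaled_integral_def[abs_def])
qed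

lemma continuous_on_scaled_integral_param:
  fixes k :: "real \<Rightarrow> real \<Rightarrow> real"
  assumes "continuous_on {0..1} w" "continuous_on (E \<times> {0..<\<delta>}) (\<lambda>(e, y). k e y)"
  shows "continuous_on (E \<times> {0..<\<delta>}) (\<lambda>(e, y). scaled_integral w (k e) y)"
proof -
  have "continuous_on ((E \<times> {0..<\<delta>}) \<times> cbox 0 1)
      (\<lambda>q. (\<lambda>(e, y). k e y) (fst (fst q), snd q * snd (fst q)))"
    by (rule continuous_on_compose2[OF assms(2)])
       (auto intro!: continuous_intros mult_mem_atLeastLessThan)
  then have "continuous_on ((E \<times> {0..<\<delta>}) \<times> cbox 0 1) (\<lambda>((e, y), s). w s * k e (s * y))"
    unfolding split_beta
    by (intro continuous_intros continuous_on_compose2[OF assms(1)]) auto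
  from integral_continuous_on_param[OF this] show ?thesis
    by (simp add: scaled_integral_def split_beta)
qed

lemma has_real_derivative_scaled_integral_param:
  fixes k k' :: "real \<Rightarrow> real \<Rightarrow> real"
  assumes "open E" "e0 \<in> E" "y \<in> {0..<\<delta>}" and w: "continuous_on {0..1} w"
    and cont_k: "continuous_on (E \<times> {0..<\<delta>}) (\<lambda>(e, y). k e y)"
    and cont_k': "continuous_on (E \<times> {0..<\<delta>}) (\<lambda>(e, y). k' e y)"
    and deriv: "\<And>e y. e \<in> E \<Longrightarrow> y \<in> {0..<\<delta>} \<Longrightarrow> ((\<lambda>e. k e y) has_real_derivative k' e y) (at e)"
  shows "((\<lambda>e. scaled_integral w (k e) y) has_real_derivative scaled_integral w (k' e0) y) (at e0)"
proof -
  obtain r where "r > 0" and ball: "ball e0 r \<subseteq> E"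
    using assms(1,2) open_contains_ball by blast
  let ?U = "ball e0 r"
  have sy: "s * y \<in> {0..<\<delta>}" if "s \<in> cbox 0 1" for s
    using mult_mem_atLeastLessThan that assms(3) by simp
  have cont: "continuous_on (?U \<times> cbox 0 1) (\<lambda>(e, s). w s * h e (s * y))"
    if "continuous_on (E \<times> {0..<\<delta>}) (\<lambda>(e, y). h e y)" for h :: "real \<Rightarrow> real \<Rightarrow> real"
  proof -
    have "continuous_on (?U \<times> cbox 0 1) (\<lambda>q. (\<lambda>(e, y). h e y) (fst q, snd q * y))"
      by (rule continuous_on_compose2[OF that]) (use ball sy in \<open>auto intro!: continuous_intros\<close>)
    then show ?thesis
      unfolding split_beta by (intro continuous_intros continuous_on_compose2[OF w]) auto
  qed
  have "((\<lambda>e. integral (cbox 0 1) (\<lambda>s. w s * k e (s * y))) has_real_derivative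
      integral (cbox 0 1) (\<lambda>s. w s * k' e0 (s * y))) (at e0 within ?U)"
  proof (rule leibniz_rule_field_derivative[OF _ _ cont[OF cont_k']])
    show "((\<lambda>e. w s * k e (s * y)) has_real_derivative w s * k' e (s * y)) (at e within ?U)"
      if "e \<in> ?U" "s \<in> cbox 0 1" for e s
    proof -
      have "e \<in> E" "s * y \<in> {0..<\<delta>}" using ball that sy by auto
      from has_field_derivative_at_within[OF deriv[OF this]] show ?thesis
        by (rule DERIV_cmult)
    qed
    show "(\<lambda>s. w s * k e (s * y)) integrable_on cbox 0 1" if "e \<in> ?U" for e
    proof (rule integrable_continuous)
      show "continuous_on (cbox 0 1) (\<lambda>s. w s * k e (s * y))"
        using continuous_on_compose2[OF cont[OF cont_k]
            continuous_on_Pair[OF continuous_on_const continuous_on_id],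
            of e "cbox 0 1"] that by (auto simp: image_subset_iff)
    qed
  qed (use \<open>r > 0\<close> in auto)
  moreover have "at e0 within ?U = at e0"
    using \<open>r > 0\<close> by (intro at_within_open) auto
  ultimately show ?thesis by (simp add: scaled_integral_def)
qed

lemma has_real_derivative_scaled_argument:
  fixes f f' :: "real \<Rightarrow> real"
  assumes "\<And>y. y \<in> {0..<\<delta>} \<Longrightarrow> (f has_real_derivative f' y) (at y within {0..<\<delta>})"
    and "y \<in> {0..<\<delta>}" "s \<in> {0..1}"
  shows "((\<lambda>s. f (s * y)) has_real_derivative f' (s * y) * y) (at s within {0..1})"
proof -
  have lin: "((\<lambda>s. s * y) has_real_derivative y) (at s within {0..1})"
    by (auto intro!: derivative_eq_intros)
  have img: "(\<lambda>s. s * y) ` {0..1} \<subseteq> {0..<\<delta>}"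
    using mult_mem_atLeastLessThan assms(2) by auto
  from DERIV_image_chain[OF DERIV_subset[OF assms(1)[OF mult_mem_atLeastLessThan[OF assms(3,2)]] img] lin]
  show ?thesis by (simp add: o_def)
qed

abbreviation taylor_rem2 :: "(real \<Rightarrow> real) \<Rightarrow> real \<Rightarrow> real" where
  "taylor_rem2 \<equiv> scaled_integral (\<lambda>s. 1 - s)"

abbreviation taylor_rem1 :: "(real \<Rightarrow> real) \<Rightarrow> real \<Rightarrow> real" where
  "taylor_rem1 \<equiv> scaled_integral (\<lambda>_. 1)"

lemma taylor_integral_remainder:
  fixes g g' g'' :: "real \<Rightarrow> real"
  assumes g': "\<And>y. y \<in> {0..<\<delta>} \<Longrightarrow> (g has_real_derivative g' y) (at y within {0..<\<delta>})"
    and g'': "\<And>y. y \<in> {0..<\<delta>} \<Longrightarrow> (g' has_real_derivative g'' y) (at y within {0..<\<delta>})"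
    and cont: "continuous_on {0..<\<delta>} g''"
    and y: "y \<in> {0..<\<delta>}"
  shows "g y = g 0 + y * g' 0 + y\<^sup>2 * taylor_rem2 g'' y"
    and "g' y = g' 0 + y * taylor_rem1 g'' y"
proof -
  note chain = has_real_derivative_scaled_argument[OF _ y]
  txt \<open>An antiderivative of y^2 (1 - s) g''(sy) is s \<mapsto> g(sy) + (1 - s) y g'(sy).\<close>
  have "((\<lambda>s. y\<^sup>2 * ((1 - s) * g'' (s * y))) has_integral
      (g (1 * y) + (1 - 1) * y * g' (1 * y)) - (g (0 * y) + (1 - 0) * y * g' (0 * y))) {0..1}"
  proof (rule fundamental_theorem_of_calculus)
    fix s :: real assume s: "s \<in> {0..1}"
    have lin: "((\<lambda>s. (1 - s) * y) has_real_derivative - y) (at s within {0..1})"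
      by (auto intro!: derivative_eq_intros)
    have "((\<lambda>s. g (s * y) + (1 - s) * y * g' (s * y)) has_real_derivative
        g' (s * y) * y + (- y * g' (s * y) + g'' (s * y) * y * ((1 - s) * y))) (at s within {0..1})"
      by (rule DERIV_add[OF chain[OF g' s] DERIV_mult[OF lin chain[OF g'' s]]])
    then show "((\<lambda>s. g (s * y) + (1 - s) * y * g' (s * y)) has_vector_derivative
        y\<^sup>2 * ((1 - s) * g'' (s * y))) (at s within {0..1})"
      by (simp add: has_real_derivative_iff_has_vector_derivative[symmetric] power2_eq_square
          algebra_simps)
  qed simp
  moreover have "((\<lambda>s. y\<^sup>2 * ((1 - s) * g'' (s * y))) has_integral
      y\<^sup>2 * scaled_integral (\<lambda>s. 1 - s) g'' y) {0..1}"
    by (intro has_integral_mult_right has_integral_scaled_integral[OF _ cont y] continuous_intros)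
  ultimately show "g y = g 0 + y * g' 0 + y\<^sup>2 * taylor_rem2 g'' y"
    by (auto dest: has_integral_unique)
  have "((\<lambda>s. g'' (s * y) * y) has_integral g' (1 * y) - g' (0 * y)) {0..1}"
    by (rule fundamental_theorem_of_calculus)
       (auto simp: has_real_derivative_iff_has_vector_derivative[symmetric] intro: chain[OF g''])
  moreover have "((\<lambda>s. g'' (s * y) * y) has_integral scaled_integral (\<lambda>_. 1) g'' y * y) {0..1}"
    using has_integral_mult_left[OF has_integral_scaled_integral[OF continuous_on_const[of _ 1] cont y]]
    by simp
  ultimately show "g' y = g' 0 + y * taylor_rem1 g'' y"
    by (auto dest: has_integral_unique simp: algebra_simps)
qed

lemma at_0_within_atLeastLessThan: "\<delta> > 0 \<Longrightarrow> at 0 within {0..<\<delta>} = at_right (0::real)"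
  by (rule at_within_nhd[where S = "{-1<..<\<delta>}"]) auto

lemma admissible_germ_deriv_zero:
  assumes "admissible_germ \<delta> g g' g''"
  shows "g' 0 = 1"
proof -
  from assms have "\<delta> > 0" and g0: "g 0 = 0"
    and g': "\<And>y. y \<in> {0..<\<delta>} \<Longrightarrow> (g has_real_derivative g' y) (at y within {0..<\<delta>})"
    and g'': "\<And>y. y \<in> {0..<\<delta>} \<Longrightarrow> (g' has_real_derivative g'' y) (at y within {0..<\<delta>})"
    and cont: "continuous_on {0..<\<delta>} g''"
    and bigo: "(\<lambda>y. g y - y) \<in> O[at_right 0](\<lambda>y. y ^ 2)"
    unfolding admissible_germ_def by auto
  txt \<open>The quotient (g y - y) / y tends to 0 by the O(y^2) bound, and to g' 0 - 1 by Taylor's formula.\<close>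
  have small: "((\<lambda>y. (g y - y) / y) \<longlongrightarrow> 0) (at_right 0)"
  proof -
    obtain C where "\<forall>\<^sub>F y in at_right 0. \<bar>g y - y\<bar> \<le> C * y\<^sup>2"
      using landau_o.bigE[OF bigo] by auto
    then have "\<forall>\<^sub>F y in at_right 0. norm ((g y - y) / y) \<le> C * y"
      using eventually_at_right_less[of 0]
      by eventually_elim (simp add: abs_divide divide_le_eq power2_eq_square mult.assoc)
    moreover have "((\<lambda>y. C * y) \<longlongrightarrow> 0) (at_right (0::real))"
      by (auto intro!: tendsto_eq_intros)
    ultimately show ?thesis by (rule Lim_null_comparison)
  qed
  have "continuous_on {0..<\<delta>} (taylor_rem2 g'')"
    by (rule continuous_on_scaled_integral[OF _ cont]) (intro continuous_intros)
  then have "continuous (at 0 within {0..<\<delta>}) (taylor_rem2 g'')"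
    using \<open>\<delta> > 0\<close> by (simp add: continuous_on_eq_continuous_within)
  then have "((\<lambda>y. g' 0 - 1 + y * taylor_rem2 g'' y) \<longlongrightarrow> g' 0 - 1 + 0 * taylor_rem2 g'' 0) (at_right 0)"
    by (intro tendsto_intros) (auto simp: continuous_within at_0_within_atLeastLessThan[OF \<open>\<delta> > 0\<close>])
  moreover have "\<forall>\<^sub>F y in at_right 0. g' 0 - 1 + y * taylor_rem2 g'' y = (g y - y) / y"
    using eventually_at_right_real[OF \<open>\<delta> > 0\<close>]
  proof eventually_elim
    case (elim y)
    then show ?case
      using taylor_integral_remainder(1)[OF g' g'' cont, of y] g0 by (simp add: field_simps power2_eq_square)
  qed
  ultimately have "((\<lambda>y. (g y - y) / y) \<longlongrightarrow> g' 0 - 1) (at_right 0)"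
    by (auto intro: Lim_transform_eventually)
  with small show ?thesis
    using tendsto_unique[OF trivial_limit_at_right_real] by fastforce
qed

lemma admissible_germ_expansion:
  assumes "admissible_germ \<delta> g g' g''" "y \<in> {0..<\<delta>}"
  shows "g y = y * (1 + y * taylor_rem2 g'' y)" and "g' y = 1 + y * taylor_rem1 g'' y"
  using taylor_integral_remainder[of \<delta> g g' g'' y] admissible_germ_deriv_zero[OF assms(1)] assms
  by (auto simp: admissible_germ_def power2_eq_square algebra_simps)

lemma admissible_germ_factor_pos:
  assumes "admissible_germ \<delta> g g' g''" "y \<in> {0..<\<delta>}"
  shows "1 + y * taylor_rem2 g'' y > 0"
proof (cases "y = 0")
  case False
  with assms have "y > 0" "g y > 0" by (auto simp: admissible_germ_def)
  then show ?thesis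
    using admissible_germ_expansion(1)[OF assms] by (simp add: zero_less_mult_iff)
qed simp

lemma hmap_zero [simp]: "hmap 0 = 0"
  by (simp add: hmap_def)

lemma hmap_pos: "0 < x \<Longrightarrow> x < 1 \<Longrightarrow> hmap x > 0"
  by (simp add: hmap_def divide_neg_neg)

lemma hinv_hmap: "0 < x \<Longrightarrow> x < 1 \<Longrightarrow> hinv (hmap x) = x"
  by (simp add: hmap_def hinv_def)

lemma has_real_derivative_hmap:
  assumes "0 < x" "x < 1"
  shows "(hmap has_real_derivative (hmap x)\<^sup>2 / x) (at x)"
proof -
  have "ln x < 0" using assms by simp
  have "((\<lambda>x. - 1 / ln x) has_real_derivative 1 / (ln x)\<^sup>2 * (1 / x)) (at x)"
    using \<open>ln x < 0\<close> assms by (auto intro!: derivative_eq_intros simp: power2_eq_square)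
  then show ?thesis
    by (simp add: hmap_def[abs_def] power2_eq_square)
qed

lemma hmap_mem_atLeastLessThan:
  assumes "\<delta> > 0" "x \<in> {0..<exp (- 1 / \<delta>)}"
  shows "hmap x \<in> {0..<\<delta>}"
proof (cases "x = 0")
  case False
  with assms have "0 < x" by simp
  with assms have "ln x < - 1 / \<delta>"
    using ln_less_cancel_iff[of x "exp (- 1 / \<delta>)"] by simp
  moreover have "- 1 / \<delta> < 0" using assms by simp
  ultimately have "ln x < 0" by linarith
  have "\<delta> * ln x < - 1" using \<open>ln x < - 1 / \<delta>\<close> assms by (simp add: field_simps)
  with \<open>ln x < 0\<close> have "- 1 / ln x < \<delta>" by (simp add: field_simps)
  with \<open>ln x < 0\<close> show ?thesis by (simp add: hmap_def divide_neg_neg less_imp_le)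
qed (use assms in simp)

lemma hmap_mem_greaterThanLessThan:
  assumes "\<delta> > 0" "x \<in> {0<..<exp (- 1 / \<delta>)}"
  shows "x < 1" "hmap x \<in> {0<..<\<delta>}"
proof -
  have "exp (- 1 / \<delta>) < 1" using assms(1) by simp
  moreover have "x < exp (- 1 / \<delta>)" using assms(2) by simp
  ultimately show "x < 1" by linarith
  with assms show "hmap x \<in> {0<..<\<delta>}"
    using hmap_pos hmap_mem_atLeastLessThan[of \<delta> x] by auto
qed

lemma hmap_tendsto_0: "(hmap \<longlongrightarrow> 0) (at_right 0)"
proof -
  have "filterlim (\<lambda>x. - ln x) at_top (at_right (0::real))"
    using ln_at_0 by (simp add: filterlim_uminus_at_top[of "\<lambda>x. - ln x"])
  from tendsto_inverse_0_at_top[OF this] show ?thesis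
    by (simp add: hmap_def[abs_def] inverse_eq_divide)
qed

lemma continuous_on_hmap:
  assumes "d \<le> 1"
  shows "continuous_on {0..<d} hmap"
  unfolding continuous_on_eq_continuous_within
proof
  fix x assume x: "x \<in> {0..<d}"
  show "continuous (at x within {0..<d}) hmap"
  proof (cases "x = 0")
    case True
    with x have "at x within {0..<d} = at_right 0"
      by (simp add: at_0_within_atLeastLessThan)
    with True show ?thesis
      using hmap_tendsto_0 by (simp add: continuous_within)
  next
    case False
    with x assms have "0 < x" "x < 1" by auto
    then have "isCont hmap x"
      by (rule DERIV_isCont[OF has_real_derivative_hmap])
    then show ?thesis
      by (rule continuous_at_imp_continuous_within)
  qed
qed

lemma continuous_on_compose_hmap:
  assumes "\<delta> > 0" "continuous_on {0..<\<delta>} f"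
  shows "continuous_on {0..<exp (- 1 / \<delta>)} (\<lambda>x. f (hmap x))"
  using assms hmap_mem_atLeastLessThan
  by (intro continuous_on_compose2[OF _ continuous_on_hmap]) (auto simp: image_subset_iff)

lemma has_real_derivative_at_0_of_eq_mult:
  fixes f K :: "real \<Rightarrow> real"
  assumes "f 0 = 0" and f: "\<And>x. x \<in> S \<Longrightarrow> x \<noteq> 0 \<Longrightarrow> f x = x * K x"
    and "continuous (at 0 within S) K"
  shows "(f has_real_derivative K 0) (at 0 within S)"
proof -
  have "(K \<longlongrightarrow> K 0) (at 0 within S)"
    using assms(3) by (simp add: continuous_within)
  moreover have "\<forall>\<^sub>F x in at 0 within S. K x = (f x - f 0) / (x - 0)"
    using f \<open>f 0 = 0\<close> by (auto simp: eventually_at_filter)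
  ultimately show ?thesis
    by (simp add: has_field_derivative_iff tendsto_cong)
qed

text \<open>If g(y) = y (1 + y q) and g'(y) = 1 + y p at y = h(x), then (h^{-1} o g o h)'(x) = conj_slope y q p.\<close>
definition conj_slope :: "real \<Rightarrow> real \<Rightarrow> real \<Rightarrow> real" where
  "conj_slope y q p = exp (q / (1 + y * q)) * (1 + y * p) / (1 + y * q)\<^sup>2"

definition Hconj_deriv :: "(real \<Rightarrow> real) \<Rightarrow> real \<Rightarrow> real" where
  "Hconj_deriv g'' x = conj_slope (hmap x) (taylor_rem2 g'' (hmap x)) (taylor_rem1 g'' (hmap x))"

lemma continuous_on_conj_slope:
  assumes "admissible_germ \<delta> g g' g''"
  shows "continuous_on {0..<\<delta>} (\<lambda>y. conj_slope y (taylor_rem2 g'' y) (taylor_rem1 g'' y))"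
    and "continuous_on {0..<\<delta>} (\<lambda>y. exp (taylor_rem2 g'' y / (1 + y * taylor_rem2 g'' y)))"
proof -
  have "continuous_on {0..<\<delta>} g''"
    using assms by (simp add: admissible_germ_def)
  then have "continuous_on {0..<\<delta>} (taylor_rem2 g'')" "continuous_on {0..<\<delta>} (taylor_rem1 g'')"
    by (auto intro!: continuous_on_scaled_integral continuous_intros)
  moreover have "1 + y * taylor_rem2 g'' y \<noteq> 0" if "y \<in> {0..<\<delta>}" for y
    using admissible_germ_factor_pos[OF assms that] by simp
  ultimately show "continuous_on {0..<\<delta>} (\<lambda>y. conj_slope y (taylor_rem2 g'' y) (taylor_rem1 g'' y))"
    and "continuous_on {0..<\<delta>} (\<lambda>y. exp (taylor_rem2 g'' y / (1 + y * taylor_rem2 g'' y)))"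
    unfolding conj_slope_def by (auto intro!: continuous_intros)
qed

lemma continuous_on_Hconj_deriv:
  assumes "admissible_germ \<delta> g g' g''"
  shows "continuous_on {0..<exp (- 1 / \<delta>)} (Hconj_deriv g'')"
  using continuous_on_compose_hmap[OF _ continuous_on_conj_slope(1)[OF assms]] assms
  by (simp add: Hconj_deriv_def[abs_def] admissible_germ_def)

lemma Hconj_eq_mult:
  assumes adm: "admissible_germ \<delta> g g' g''" and x: "x \<in> {0<..<exp (- 1 / \<delta>)}"
  defines "y \<equiv> hmap x"
  shows "Hconj g x = x * exp (taylor_rem2 g'' y / (1 + y * taylor_rem2 g'' y))"
proof -
  have "\<delta> > 0" using adm by (simp add: admissible_germ_def)
  note x_y = hmap_mem_greaterThanLessThan[OF this x, folded y_def]
  define G where "G = 1 + y * taylor_rem2 g'' y"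
  have "G > 0" using admissible_germ_factor_pos[OF adm] x_y(2) by (simp add: G_def)
  have "g y = y * G" using admissible_germ_expansion(1)[OF adm] x_y(2) by (simp add: G_def)
  then have "- 1 / g y = - 1 / y + taylor_rem2 g'' y / G"
    using x_y(2) \<open>G > 0\<close> by (simp add: G_def field_simps)
  then have "hinv (g y) = hinv y * exp (taylor_rem2 g'' y / G)"
    by (simp add: hinv_def exp_add[symmetric])
  then show ?thesis
    using x x_y(1) hinv_hmap by (simp add: Hconj_def y_def G_def)
qed

lemma has_real_derivative_Hconj_pos:
  assumes adm: "admissible_germ \<delta> g g' g''" and x: "x \<in> {0<..<exp (- 1 / \<delta>)}"
  shows "(Hconj g has_real_derivative Hconj_deriv g'' x) (at x)"
proof -
  have "\<delta> > 0" using adm by (simp add: admissible_germ_def)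
  define y where "y = hmap x"
  note x_y = hmap_mem_greaterThanLessThan[OF \<open>\<delta> > 0\<close> x, folded y_def]
  then have y: "y \<in> {0..<\<delta>}" by simp
  define G where "G = 1 + y * taylor_rem2 g'' y"
  have "G > 0" using admissible_germ_factor_pos[OF adm y] by (simp add: G_def)
  have g: "g y = y * G" and g': "g' y = 1 + y * taylor_rem1 g'' y"
    using admissible_germ_expansion[OF adm y] by (simp_all add: G_def)
  have "at y within {0..<\<delta>} = at y"
    using x_y(2) by (intro at_within_interior) auto
  moreover have "(g has_real_derivative g' y) (at y within {0..<\<delta>})"
    using adm y by (simp add: admissible_germ_def)
  ultimately have "(g has_real_derivative g' y) (at y)"
    by simp
  then have "((\<lambda>z. g (hmap z)) has_real_derivative g' y * (y\<^sup>2 / x)) (at x)"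
    using DERIV_chain2[OF _ has_real_derivative_hmap] x x_y(1) by (simp add: y_def)
  from DERIV_fun_exp[OF DERIV_minus[OF DERIV_inverse_fun[OF this]]]
  have "((\<lambda>z. hinv (g (hmap z))) has_real_derivative
      hinv (g y) * (g' y * (y\<^sup>2 / x) / (g y)\<^sup>2)) (at x)"
    using x_y(2) \<open>G > 0\<close> g by (simp add: hinv_def y_def inverse_eq_divide power2_eq_square)
  moreover have "hinv (g y) * (g' y * (y\<^sup>2 / x) / (g y)\<^sup>2) = Hconj_deriv g'' x"
    using Hconj_eq_mult[OF adm x] x x_y(2) \<open>G > 0\<close>
    by (simp add: Hconj_def Hconj_deriv_def conj_slope_def g g' y_def[symmetric] G_def[symmetric]
        field_simps power2_eq_square)
  ultimately have "((\<lambda>z. hinv (g (hmap z))) has_real_derivative Hconj_deriv g'' x) (at x)"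
    by simp
  then show ?thesis
    by (rule has_field_derivative_transform_within_open[where S = "{0<..<1}"])
       (use x x_y(1) in \<open>auto simp: Hconj_def\<close>)
qed

lemma has_real_derivative_Hconj:
  assumes adm: "admissible_germ \<delta> g g' g''" and x: "x \<in> {0..<exp (- 1 / \<delta>)}"
  shows "(Hconj g has_real_derivative Hconj_deriv g'' x) (at x within {0..<exp (- 1 / \<delta>)})"
proof (cases "x = 0")
  case True
  have "\<delta> > 0" using adm by (simp add: admissible_germ_def)
  define K where "K x = exp (taylor_rem2 g'' (hmap x) / (1 + hmap x * taylor_rem2 g'' (hmap x)))" for x
  have "continuous_on {0..<exp (- 1 / \<delta>)} K"
    unfolding K_def by (rule continuous_on_compose_hmap[OF \<open>\<delta> > 0\<close> continuous_on_conj_slope(2)[OF adm]])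
  then have "continuous (at 0 within {0..<exp (- 1 / \<delta>)}) K"
    by (simp add: continuous_on_eq_continuous_within)
  then have "(Hconj g has_real_derivative K 0) (at 0 within {0..<exp (- 1 / \<delta>)})"
  proof (rule has_real_derivative_at_0_of_eq_mult[rotated 2])
    show "Hconj g z = z * K z" if "z \<in> {0..<exp (- 1 / \<delta>)}" "z \<noteq> 0" for z
      using Hconj_eq_mult[OF adm] that by (simp add: K_def)
  qed (simp add: Hconj_def)
  moreover have "K 0 = Hconj_deriv g'' 0"
    by (simp add: K_def Hconj_deriv_def conj_slope_def)
  ultimately show ?thesis
    using True by simp
next
  case False
  with x have "x \<in> {0<..<exp (- 1 / \<delta>)}" by simp
  then show ?thesis
    by (rule has_field_derivative_at_within[OF has_real_derivative_Hconj_pos[OF adm]])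
qed

definition conj_slope_dparam :: "real \<Rightarrow> real \<Rightarrow> real \<Rightarrow> real \<Rightarrow> real \<Rightarrow> real" where
  "conj_slope_dparam y q p q' p' =
     exp (q / (1 + y * q)) / (1 + y * q)\<^sup>2 *
       ((1 + y * p) * q' / (1 + y * q)\<^sup>2 + y * p' - 2 * y * q' * (1 + y * p) / (1 + y * q))"

lemma has_real_derivative_conj_slope:
  assumes q: "(q has_real_derivative q') (at e)" and p: "(p has_real_derivative p') (at e)"
    and "1 + y * q e \<noteq> 0"
  shows "((\<lambda>e. conj_slope y (q e) (p e)) has_real_derivative
      conj_slope_dparam y (q e) (p e) q' p') (at e)"
proof -
  define G where "G = 1 + y * q e"
  have "G \<noteq> 0" using assms(3) by (simp add: G_def)
  have "((\<lambda>e. q e / (1 + y * q e)) has_real_derivative (q' * G - q e * (y * q')) / (G * G)) (at e)"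
    using assms(3) unfolding G_def by (auto intro!: derivative_eq_intros q)
  moreover have "q' * G - q e * (y * q') = q'"
    by (simp add: G_def algebra_simps)
  ultimately have "((\<lambda>e. q e / (1 + y * q e)) has_real_derivative q' / G\<^sup>2) (at e)"
    by (simp add: power2_eq_square)
  then show ?thesis
    unfolding conj_slope_def
  proof (rule DERIV_cong[OF DERIV_divide[OF DERIV_mult[OF DERIV_fun_exp
        DERIV_add[OF DERIV_const[of 1] DERIV_cmult[OF p, of y]]]
        DERIV_power[OF DERIV_add[OF DERIV_const[of 1] DERIV_cmult[OF q, of y]], of 2]]])
    show "(1 + y * q e)\<^sup>2 \<noteq> 0" using assms(3) by simp
  qed (use \<open>G \<noteq> 0\<close> in \<open>simp add: conj_slope_dparam_def G_def[symmetric] field_simps power2_eq_square\<close>)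
qed

definition Hconj_deriv_dparam :: "(real \<Rightarrow> real) \<Rightarrow> (real \<Rightarrow> real) \<Rightarrow> real \<Rightarrow> real" where
  "Hconj_deriv_dparam g'' k x =
     conj_slope_dparam (hmap x) (taylor_rem2 g'' (hmap x)) (taylor_rem1 g'' (hmap x))
       (taylor_rem2 k (hmap x)) (taylor_rem1 k (hmap x))"

lemma has_real_derivative_Hconj_deriv_param:
  fixes g g' g'' k :: "real \<Rightarrow> real \<Rightarrow> real"
  assumes "open E" and adm: "\<And>e. e \<in> E \<Longrightarrow> admissible_germ \<delta> (g e) (g' e) (g'' e)"
    and cont: "continuous_on (E \<times> {0..<\<delta>}) (\<lambda>(e, y). g'' e y)"
    and cont_k: "continuous_on (E \<times> {0..<\<delta>}) (\<lambda>(e, y). k e y)"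
    and deriv: "\<And>e y. e \<in> E \<Longrightarrow> y \<in> {0..<\<delta>} \<Longrightarrow> ((\<lambda>e. g'' e y) has_real_derivative k e y) (at e)"
    and "e0 \<in> E" "x \<in> {0..<exp (- 1 / \<delta>)}"
  shows "((\<lambda>e. Hconj_deriv (g'' e) x) has_real_derivative Hconj_deriv_dparam (g'' e0) (k e0) x) (at e0)"
proof -
  have "\<delta> > 0" using adm[OF \<open>e0 \<in> E\<close>] by (simp add: admissible_germ_def)
  define y where "y = hmap x"
  have y: "y \<in> {0..<\<delta>}"
    using hmap_mem_atLeastLessThan[OF \<open>\<delta> > 0\<close> \<open>x \<in> _\<close>] by (simp add: y_def)
  have "((\<lambda>e. taylor_rem2 (g'' e) y) has_real_derivative taylor_rem2 (k e0) y) (at e0)"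
    "((\<lambda>e. taylor_rem1 (g'' e) y) has_real_derivative taylor_rem1 (k e0) y) (at e0)"
    by (intro has_real_derivative_scaled_integral_param[OF \<open>open E\<close> \<open>e0 \<in> E\<close> y _ cont cont_k deriv]
        continuous_intros; assumption)+
  moreover have "1 + y * taylor_rem2 (g'' e0) y \<noteq> 0"
    using admissible_germ_factor_pos[OF adm[OF \<open>e0 \<in> E\<close>] y] by simp
  ultimately show ?thesis
    unfolding Hconj_deriv_def Hconj_deriv_dparam_def y_def[symmetric]
    by (rule has_real_derivative_conj_slope)
qed

lemma continuous_on_Hconj_deriv_dparam:
  fixes g g' g'' k :: "real \<Rightarrow> real \<Rightarrow> real"
  assumes adm: "\<And>e. e \<in> E \<Longrightarrow> admissible_germ \<delta> (g e) (g' e) (g'' e)"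
    and cont: "continuous_on (E \<times> {0..<\<delta>}) (\<lambda>(e, y). g'' e y)"
    and cont_k: "continuous_on (E \<times> {0..<\<delta>}) (\<lambda>(e, y). k e y)"
  shows "continuous_on (E \<times> {0..<exp (- 1 / \<delta>)}) (\<lambda>(e, x). Hconj_deriv_dparam (g'' e) (k e) x)"
proof (cases "E = {}")
  case False
  then have "\<delta> > 0" using adm by (auto simp: admissible_germ_def)
  have w2: "continuous_on {0..1} (\<lambda>s::real. 1 - s)" and w1: "continuous_on {0..1} (\<lambda>s::real. 1)"
    by (intro continuous_intros)+
  note rems = continuous_on_scaled_integral_param[OF w2 cont] continuous_on_scaled_integral_param[OF w1 cont]
    continuous_on_scaled_integral_param[OF w2 cont_k] continuous_on_scaled_integral_param[OF w1 cont_k]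
  have pos: "1 + snd q * taylor_rem2 (g'' (fst q)) (snd q) \<noteq> 0" if "q \<in> E \<times> {0..<\<delta>}" for q
    using admissible_germ_factor_pos[OF adm] that by (force simp: less_le)
  have "continuous_on (E \<times> {0..<\<delta>}) (\<lambda>q. conj_slope_dparam (snd q)
      (taylor_rem2 (g'' (fst q)) (snd q)) (taylor_rem1 (g'' (fst q)) (snd q))
      (taylor_rem2 (k (fst q)) (snd q)) (taylor_rem1 (k (fst q)) (snd q)))"
    unfolding conj_slope_dparam_def
    by (intro continuous_intros rems[unfolded split_beta]) (use pos in auto)
  moreover have "continuous_on (E \<times> {0..<exp (- 1 / \<delta>)}) (\<lambda>q. (fst q, hmap (snd q)))"
    using \<open>\<delta> > 0\<close> by (intro continuous_intros continuous_on_compose2[OF continuous_on_hmap]) auto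
  moreover have "(\<lambda>q. (fst q, hmap (snd q))) ` (E \<times> {0..<exp (- 1 / \<delta>)}) \<subseteq> E \<times> {0..<\<delta>}"
    using hmap_mem_atLeastLessThan[OF \<open>\<delta> > 0\<close>] by auto
  ultimately show ?thesis
    using continuous_on_compose2 by (fastforce simp: Hconj_deriv_dparam_def split_beta)
qed simp

theorem proposition1:
  shows "(\<forall>\<delta> g g1 g2. admissible_germ \<delta> g g1 g2 \<longrightarrow>
            (\<exists>\<delta>'>0. \<exists>H1.
               (\<forall>x\<in>{0..<\<delta>'}. (Hconj g has_real_derivative H1 x) (at x within {0..<\<delta>'})) \<and>
               continuous_on {0..<\<delta>'} H1))
       \<and>
       (\<forall>(E::real set) \<delta> (g::real \<Rightarrow> real \<Rightarrow> real) g1 g2 g2e.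
          open E \<and>
          (\<forall>\<epsilon>\<in>E. admissible_germ \<delta> (g \<epsilon>) (g1 \<epsilon>) (g2 \<epsilon>)) \<and>
          (\<forall>\<epsilon>\<in>E. \<forall>y\<in>{0..<\<delta>}. ((\<lambda>e. g2 e y) has_real_derivative g2e \<epsilon> y) (at \<epsilon>)) \<and>
          continuous_on (E \<times> {0..<\<delta>}) (\<lambda>(e, y). g2e e y)
          \<longrightarrow>
          (\<exists>\<delta>'>0. \<exists>H1 H1e.
             (\<forall>\<epsilon>\<in>E. \<forall>x\<in>{0..<\<delta>'}.
                (Hconj (g \<epsilon>) has_real_derivative H1 \<epsilon> x) (at x within {0..<\<delta>'})) \<and>
             (\<forall>\<epsilon>\<in>E. continuous_on {0..<\<delta>'} (H1 \<epsilon>)) \<and>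
             (\<forall>\<epsilon>\<in>E. \<forall>x\<in>{0..<\<delta>'}. ((\<lambda>e. H1 e x) has_real_derivative H1e \<epsilon> x) (at \<epsilon>)) \<and>
             continuous_on (E \<times> {0..<\<delta>'}) (\<lambda>(e, x). H1e e x)))"
proof (intro conjI allI impI)
  fix \<delta> and g g' g'' :: "real \<Rightarrow> real"
  assume adm: "admissible_germ \<delta> g g' g''"
  show "\<exists>\<delta>'>0. \<exists>H1. (\<forall>x\<in>{0..<\<delta>'}. (Hconj g has_real_derivative H1 x) (at x within {0..<\<delta>'})) \<and>
      continuous_on {0..<\<delta>'} H1"
    using has_real_derivative_Hconj[OF adm] continuous_on_Hconj_deriv[OF adm]
    by (intro exI[of _ "exp (- 1 / \<delta>)"] conjI exI[of _ "Hconj_deriv g''"]) auto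
next
  fix E :: "real set" and \<delta> and g g' g'' k :: "real \<Rightarrow> real \<Rightarrow> real"
  assume "open E \<and> (\<forall>e\<in>E. admissible_germ \<delta> (g e) (g' e) (g'' e)) \<and>
    (\<forall>e\<in>E. \<forall>y\<in>{0..<\<delta>}. ((\<lambda>e. g'' e y) has_real_derivative k e y) (at e)) \<and>
    continuous_on (E \<times> {0..<\<delta>}) (\<lambda>(e, y). k e y)"
  then have "open E" and adm: "\<And>e. e \<in> E \<Longrightarrow> admissible_germ \<delta> (g e) (g' e) (g'' e)"
    and deriv: "\<And>e y. e \<in> E \<Longrightarrow> y \<in> {0..<\<delta>} \<Longrightarrow> ((\<lambda>e. g'' e y) has_real_derivative k e y) (at e)"
    and cont_k: "continuous_on (E \<times> {0..<\<delta>}) (\<lambda>(e, y). k e y)"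
    by auto
  have cont: "continuous_on (E \<times> {0..<\<delta>}) (\<lambda>(e, y). g'' e y)"
    using continuous_on_Times_of_continuous_partial_derivative[OF \<open>open E\<close> deriv cont_k] adm
    by (simp add: admissible_germ_def)
  show "\<exists>\<delta>'>0. \<exists>H1 H1e.
      (\<forall>e\<in>E. \<forall>x\<in>{0..<\<delta>'}. (Hconj (g e) has_real_derivative H1 e x) (at x within {0..<\<delta>'})) \<and>
      (\<forall>e\<in>E. continuous_on {0..<\<delta>'} (H1 e)) \<and>
      (\<forall>e\<in>E. \<forall>x\<in>{0..<\<delta>'}. ((\<lambda>e. H1 e x) has_real_derivative H1e e x) (at e)) \<and>
      continuous_on (E \<times> {0..<\<delta>'}) (\<lambda>(e, x). H1e e x)"
    using has_real_derivative_Hconj[OF adm] continuous_on_Hconj_deriv[OF adm]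
      has_real_derivative_Hconj_deriv_param[OF \<open>open E\<close> adm cont cont_k deriv]
      continuous_on_Hconj_deriv_dparam[OF adm cont cont_k]
    by (intro exI[of _ "exp (- 1 / \<delta>)"] conjI exI[of _ "\<lambda>e. Hconj_deriv (g'' e)"]
        exI[of _ "\<lambda>e. Hconj_deriv_dparam (g'' e) (k e)"]) auto
qed

end
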